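(* With $P=K\overline{K}$ and $Q=L\overline{L}$, the following set of monomials is a basis of the vector space $U_{K,L,norm}$: $\{PK^iE^jF^k\}_{i,j,k\ge0}\cup\{\overline{K}^iE^jF^k\}_{i>0,\,j,k\ge0}\cup\{QL^iE^jF^k\}_{i,j,k\ge0}\cup\{\overline{L}^iE^jF^k\}_{i>0,\,j,k\ge0}$.
   Context: Fix $q\in\mathbb{C}$, $q\neq 0,\pm1$. $U_{K,L,norm}$ is the unital associative $\mathbb{C}$-algebra generated by $K,\overline{K},L,\overline{L},E,F$ subject to $K\overline{K}K=K$, $\overline{K}K\overline{K}=\overline{K}$, $K\overline{K}=\overline{K}K$, $L\overline{L}L=L$, $\overline{L}L\overline{L}=\overline{L}$, $L\overline{L}=\overline{L}L$, $K\overline{K}+L\overline{L}=\mathbf{1}$, $KE=q^2EK$, $LE=q^2EL$, $\overline{K}E=q^{-2}E\overline{K}$, $\overline{L}E=q^{-2}E\overline{L}$, $KF=q^{-2}FK$, $LF=q^{-2}FL$, $\overline{K}F=q^2F\overline{K}$, $\overline{L}F=q^2F\overline{L}$, $EF-FE=\frac{(K+L)-(\overline{K}+\overline{L})}{q-q^{-1}}$. Here $PK^0=P$, $QL^0=Q$. *)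

theory Defs
  imports Complex_Main
begin

text \<open>Free unital associative C-algebra on the generators K, Kbar, L, Lbar, E, F:
  elements are finitely supported functions from words (lists of generators) to C;
  the word w stands for the monomial w_1 w_2 ... w_n, and [] is the unit.\<close>

datatype gen = GK | GKb | GL | GLb | GE | GF

type_synonym fa = "gen list \<Rightarrow> complex"

definition fa_add :: "fa \<Rightarrow> fa \<Rightarrow> fa" where
  "fa_add f g = (\<lambda>w. f w + g w)"

definition fa_sub :: "fa \<Rightarrow> fa \<Rightarrow> fa" where
  "fa_sub f g = (\<lambda>w. f w - g w)"

definition fa_smul :: "complex \<Rightarrow> fa \<Rightarrow> fa" where
  "fa_smul c f = (\<lambda>w. c * f w)"

definition fa_zero :: fa where
  "fa_zero = (\<lambda>w. 0)"

definition fa_mul :: "fa \<Rightarrow> fa \<Rightarrow> fa" where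
  "fa_mul f g = (\<lambda>w. \<Sum>i\<le>length w. f (take i w) * g (drop i w))"

definition mon :: "gen list \<Rightarrow> fa" where
  "mon u = (\<lambda>w. if w = u then 1 else 0)"

definition U_rels :: "complex \<Rightarrow> fa set" where
  "U_rels q = {
     fa_sub (mon [GK,GKb,GK]) (mon [GK]),
     fa_sub (mon [GKb,GK,GKb]) (mon [GKb]),
     fa_sub (mon [GK,GKb]) (mon [GKb,GK]),
     fa_sub (mon [GL,GLb,GL]) (mon [GL]),
     fa_sub (mon [GLb,GL,GLb]) (mon [GLb]),
     fa_sub (mon [GL,GLb]) (mon [GLb,GL]),
     fa_sub (fa_add (mon [GK,GKb]) (mon [GL,GLb])) (mon []),
     fa_sub (mon [GK,GE]) (fa_smul (q^2) (mon [GE,GK])),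
     fa_sub (mon [GL,GE]) (fa_smul (q^2) (mon [GE,GL])),
     fa_sub (mon [GKb,GE]) (fa_smul (inverse q ^ 2) (mon [GE,GKb])),
     fa_sub (mon [GLb,GE]) (fa_smul (inverse q ^ 2) (mon [GE,GLb])),
     fa_sub (mon [GK,GF]) (fa_smul (inverse q ^ 2) (mon [GF,GK])),
     fa_sub (mon [GL,GF]) (fa_smul (inverse q ^ 2) (mon [GF,GL])),
     fa_sub (mon [GKb,GF]) (fa_smul (q^2) (mon [GF,GKb])),
     fa_sub (mon [GLb,GF]) (fa_smul (q^2) (mon [GF,GLb])),
     fa_sub (fa_sub (mon [GE,GF]) (mon [GF,GE]))
            (fa_smul (1 / (q - inverse q))
               (fa_sub (fa_add (mon [GK]) (mon [GL])) (fa_add (mon [GKb]) (mon [GLb]))))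
   }"

inductive_set U_ideal :: "complex \<Rightarrow> fa set" for q :: complex where
  zero: "fa_zero \<in> U_ideal q"
| gen: "r \<in> U_rels q \<Longrightarrow> fa_mul (fa_mul (mon u) r) (mon v) \<in> U_ideal q"
| add: "a \<in> U_ideal q \<Longrightarrow> b \<in> U_ideal q \<Longrightarrow> fa_add a b \<in> U_ideal q"
| smul: "a \<in> U_ideal q \<Longrightarrow> fa_smul c a \<in> U_ideal q"

datatype btype = TP | TKb | TQ | TLb

definition basis_idx :: "(btype \<times> nat \<times> nat \<times> nat) set" where
  "basis_idx = {(t,i,j,k). (t = TKb \<or> t = TLb) \<longrightarrow> i > 0}"

fun bword :: "btype \<times> nat \<times> nat \<times> nat \<Rightarrow> gen list" where
  "bword (TP, i, j, k) = [GK,GKb] @ replicate i GK @ replicate j GE @ replicate k GF"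
| "bword (TKb, i, j, k) = replicate i GKb @ replicate j GE @ replicate k GF"
| "bword (TQ, i, j, k) = [GL,GLb] @ replicate i GL @ replicate j GE @ replicate k GF"
| "bword (TLb, i, j, k) = replicate i GLb @ replicate j GE @ replicate k GF"

definition lincomb :: "(btype \<times> nat \<times> nat \<times> nat) set \<Rightarrow> (btype \<times> nat \<times> nat \<times> nat \<Rightarrow> complex) \<Rightarrow> fa" where
  "lincomb S c = (\<lambda>w. \<Sum>b\<in>S. c b * mon (bword b) w)"

end

theory Submission
  imports Defs
begin

(*
  PBW basis of U_{K,L,norm}.  Write U for the free algebra modulo the ideal U_ideal q, and
  P = K Kbar, Q = L Lbar (orthogonal idempotents with P + Q = 1).

  We build a representation of the free algebra on the functions on
  bool x int x nat x nat.  The basis vector e(s,i,j,k) models P K^i E^j F^k (s = True,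
  i >= 0), Kbar^(-i) E^j F^k (s = True, i < 0), and likewise with Q, L, Lbar for s = False.
  Every defining relation acts as zero, so every element of the ideal kills the vacuum
  vector (the image of 1), while the basis monomial with index b sends the vacuum to the
  distinct vector e(ix b).  Hence a combination of basis monomials lying in the ideal is zero.

  Call x "spanned" if it is congruent modulo the ideal to a combination of basis
  monomials.  Left multiplication by a generator preserves the ideal, so the spanned words
  are closed under prepending g once g b is spanned for every basis word b.  That finite
  check is a case analysis using the defining relations (idempotent relations, q-commutation
  of E, F past K, L, the cross-sector vanishing derived from P + Q = 1, and the commutator
  [E,F]); induction on the word then shows that every word, hence every element, is spanned.
*)

text \<open>The element u r v of the free algebra, described directly on words.\<close>
definition ctx :: "gen list \<Rightarrow> gen list \<Rightarrow> fa \<Rightarrow> fa" where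
  "ctx u v r = (\<lambda>w. if \<exists>a. w = u @ a @ v then r (THE a. w = u @ a @ v) else 0)"

lemma ctx_app [simp]: "ctx u v r (u @ a @ v) = r a"
  unfolding ctx_def by auto

lemma ctx_not: "\<forall>a. w \<noteq> u @ a @ v \<Longrightarrow> ctx u v r w = 0"
  unfolding ctx_def by auto

lemma mul_mon_left:
  "fa_mul (mon u) f = (\<lambda>w. if take (length u) w = u then f (drop (length u) w) else 0)"
proof (rule ext)
  fix w
  have "fa_mul (mon u) f w = (\<Sum>i\<le>length w. if i = length u
          then (if take (length u) w = u then f (drop (length u) w) else 0) else 0)"
    unfolding fa_mul_def mon_def by (rule sum.cong) auto
  also have "\<dots> = (if take (length u) w = u then f (drop (length u) w) else 0)"
    by (auto simp: sum.delta' dest: arg_cong[of _ _ length])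
  finally show "fa_mul (mon u) f w = (if take (length u) w = u then f (drop (length u) w) else 0)" .
qed

lemma mul_mon_right:
  "fa_mul f (mon v) = (\<lambda>w. if length v \<le> length w \<and> drop (length w - length v) w = v
                             then f (take (length w - length v) w) else 0)"
proof (rule ext)
  fix w
  have "fa_mul f (mon v) w = (\<Sum>i\<le>length w. if i = length w - length v
          then (if length v \<le> length w \<and> drop (length w - length v) w = v
                then f (take (length w - length v) w) else 0) else 0)"
    unfolding fa_mul_def mon_def by (rule sum.cong) auto
  also have "\<dots> = (if length v \<le> length w \<and> drop (length w - length v) w = v
                   then f (take (length w - length v) w) else 0)"
    by (auto simp: sum.delta')
  finally show "fa_mul f (mon v) w = (if length v \<le> length w \<and> drop (length w - length v) w = v
                   then f (take (length w - length v) w) else 0)" .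
qed

lemma mul_mon_mon_eq_ctx: "fa_mul (fa_mul (mon u) r) (mon v) = ctx u v r"
proof (rule ext)
  fix w
  show "fa_mul (fa_mul (mon u) r) (mon v) w = ctx u v r w"
  proof (cases "\<exists>a. w = u @ a @ v")
    case True
    then obtain a where w: "w = u @ a @ v" by blast
    show ?thesis unfolding w mul_mon_right mul_mon_left by simp
  next
    case False
    have "\<not> (length v \<le> length w \<and> drop (length w - length v) w = v \<and>
           take (length u) (take (length w - length v) w) = u)"
    proof
      assume H: "length v \<le> length w \<and> drop (length w - length v) w = v \<and>
                 take (length u) (take (length w - length v) w) = u"
      let ?m = "take (length w - length v) w"
      have "w = ?m @ v" using H by (metis append_take_drop_id)
      moreover have "?m = u @ drop (length u) ?m" using H by (metis append_take_drop_id)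
      ultimately have "w = u @ drop (length u) ?m @ v" by (metis append.assoc)
      with False show False by blast
    qed
    then show ?thesis using False unfolding mul_mon_right mul_mon_left by (auto simp: ctx_not)
  qed
qed

lemma ctx_rel_in_ideal: "r \<in> U_rels q \<Longrightarrow> ctx u v r \<in> U_ideal q"
  using U_ideal.gen[of r q u v] by (simp add: mul_mon_mon_eq_ctx)

lemma ctx_mon: "ctx u v (mon a) = mon (u @ a @ v)"
  by (rule ext) (auto simp: ctx_def mon_def)
lemma ctx_sub: "ctx u v (fa_sub f g) = fa_sub (ctx u v f) (ctx u v g)"
  by (rule ext) (auto simp: ctx_def fa_sub_def)
lemma ctx_add: "ctx u v (fa_add f g) = fa_add (ctx u v f) (ctx u v g)"
  by (rule ext) (auto simp: ctx_def fa_add_def)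
lemma ctx_smul: "ctx u v (fa_smul c f) = fa_smul c (ctx u v f)"
  by (rule ext) (auto simp: ctx_def fa_smul_def)

lemmas ctx_simps = ctx_mon ctx_sub ctx_add ctx_smul
lemmas fa_defs = fa_sub_def fa_add_def fa_smul_def

lemma ideal_cong: "x \<in> U_ideal q \<Longrightarrow> (\<And>w. y w = x w) \<Longrightarrow> y \<in> U_ideal q"
  by (metis ext)

lemma ideal_zero: "(\<lambda>w. 0) \<in> U_ideal q"
  using U_ideal.zero[of q] by (simp add: fa_zero_def)

lemma ideal_lin:
  "x \<in> U_ideal q \<Longrightarrow> y \<in> U_ideal q \<Longrightarrow> (\<And>w. t w = a * x w + b * y w) \<Longrightarrow> t \<in> U_ideal q"
proof -
  assume x: "x \<in> U_ideal q" and y: "y \<in> U_ideal q" and t: "\<And>w. t w = a * x w + b * y w"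
  have "fa_add (fa_smul a x) (fa_smul b y) \<in> U_ideal q"
    using x y by (intro U_ideal.add U_ideal.smul)
  then show ?thesis by (rule ideal_cong) (simp add: t fa_add_def fa_smul_def)
qed

lemma ideal_lin3:
  "x \<in> U_ideal q \<Longrightarrow> y \<in> U_ideal q \<Longrightarrow> z \<in> U_ideal q \<Longrightarrow>
   (\<And>w. t w = a * x w + b * y w + c * z w) \<Longrightarrow> t \<in> U_ideal q"
  by (rule ideal_lin[where a = 1 and b = c, OF ideal_lin[where a = a and b = b]]) auto

lemma binomial_in_ideal:
  assumes "fa_sub (mon a) (fa_smul c (mon b)) \<in> U_rels q"
  shows "(\<lambda>w. mon (u @ a @ v) w - c * mon (u @ b @ v) w) \<in> U_ideal q"
  by (rule ideal_cong[OF ctx_rel_in_ideal[OF assms, of u v]]) (simp only: ctx_simps, simp add: fa_defs)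

lemma difference_in_ideal:
  assumes "fa_sub (mon a) (mon b) \<in> U_rels q"
  shows "(\<lambda>w. mon (u @ a @ v) w - mon (u @ b @ v) w) \<in> U_ideal q"
  by (rule ideal_cong[OF ctx_rel_in_ideal[OF assms, of u v]]) (simp only: ctx_simps, simp add: fa_defs)

section \<open>A faithful representation on the PBW index space\<close>

text \<open>Index (s,i,j,k): sector s (True for P, K, Kbar; False for Q, L, Lbar), signed exponent i
  of K resp. L (negative for Kbar resp. Lbar), exponents j of E and k of F.\<close>
type_synonym state = "bool \<times> int \<times> nat \<times> nat"
type_synonym vec = "state \<Rightarrow> complex"

definition q2pow :: "complex \<Rightarrow> int \<Rightarrow> complex" where "q2pow q i = (q^2) powi i"
definition qdiff :: "complex \<Rightarrow> complex" where "qdiff q = q - inverse q"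

text \<open>The sums 1 + q^-2 + ... + q^(-2(j-1)) and 1 + q^2 + ... + q^(2(j-1)); they are the
  coefficients produced by moving F to the right past E^j.\<close>
primrec qsum_inv :: "complex \<Rightarrow> nat \<Rightarrow> complex" where
  "qsum_inv q 0 = 0" | "qsum_inv q (Suc j) = 1 + inverse (q^2) * qsum_inv q j"
primrec qsum :: "complex \<Rightarrow> nat \<Rightarrow> complex" where
  "qsum q 0 = 0" | "qsum q (Suc j) = 1 + q^2 * qsum q j"

text \<open>The operators by which the generators act: K/L shift i up within their own sector and
  annihilate the other one; E raises j; F raises k and produces the commutator corrections.\<close>
definition opK :: "bool \<Rightarrow> vec \<Rightarrow> vec" where
  "opK s x = (\<lambda>(t,i,j,k). if t = s then x (t,i-1,j,k) else 0)"
definition opKb :: "bool \<Rightarrow> vec \<Rightarrow> vec" where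
  "opKb s x = (\<lambda>(t,i,j,k). if t = s then x (t,i+1,j,k) else 0)"
definition opE :: "complex \<Rightarrow> vec \<Rightarrow> vec" where
  "opE q x = (\<lambda>(t,i,j,k). if j = 0 then 0 else q2pow q (-i) * x (t,i,j-1,k))"
definition opF :: "complex \<Rightarrow> vec \<Rightarrow> vec" where
  "opF q x = (\<lambda>(t,i,j,k). (if k = 0 then 0 else q2pow q i * x (t,i,j,k-1))
      - q2pow q (i-1) * qsum_inv q (Suc j) / qdiff q * x (t,i-1,Suc j,k)
      + q2pow q (i+1) * qsum q (Suc j) / qdiff q * x (t,i+1,Suc j,k))"

lemma q2pow_add: "q \<noteq> 0 \<Longrightarrow> q2pow q (a + b) = q2pow q a * q2pow q b"
  unfolding q2pow_def by (rule power_int_add) simp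
lemma q2pow_diff: "q \<noteq> 0 \<Longrightarrow> q2pow q (a - b) = q2pow q a / q2pow q b"
  unfolding q2pow_def by (rule power_int_diff) simp
lemma q2pow_minus: "q2pow q (- a) = inverse (q2pow q a)"
  unfolding q2pow_def by (rule power_int_minus)
lemma q2pow_1: "q2pow q 1 = q^2" unfolding q2pow_def by simp
lemma q2pow_0: "q2pow q 0 = 1" unfolding q2pow_def by simp
lemma q2pow_nz: "q \<noteq> 0 \<Longrightarrow> q2pow q a \<noteq> 0" unfolding q2pow_def by simp

lemmas q2pow_simps = q2pow_add q2pow_diff q2pow_minus q2pow_1 q2pow_0 q2pow_nz

lemma opK_opKb_opK: "opK s (opKb s (opK s x)) = opK s x"
  by (rule ext) (auto simp: opK_def opKb_def)
lemma opKb_opK_opKb: "opKb s (opK s (opKb s x)) = opKb s x"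
  by (rule ext) (auto simp: opK_def opKb_def)
lemma opK_opKb_commute: "opK s (opKb s x) = opKb s (opK s x)"
  by (rule ext) (auto simp: opK_def opKb_def)
lemma idempotents_sum_to_one: "opK True (opKb True x) p + opK False (opKb False x) p = x p"
  by (cases p) (auto simp: opK_def opKb_def)
lemma opK_opE: "q \<noteq> 0 \<Longrightarrow> opK s (opE q x) p = q^2 * opE q (opK s x) p"
  by (cases p) (auto simp: opK_def opE_def q2pow_simps field_simps)
lemma opKb_opE: "q \<noteq> 0 \<Longrightarrow> opKb s (opE q x) p = inverse q ^ 2 * opE q (opKb s x) p"
  by (cases p) (auto simp: opKb_def opE_def q2pow_simps field_simps)
lemma opK_opF:
  "q \<noteq> 0 \<Longrightarrow> qdiff q \<noteq> 0 \<Longrightarrow> opK s (opF q x) p = inverse q ^ 2 * opF q (opK s x) p"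
  by (cases p) (auto simp: opK_def opF_def q2pow_simps field_simps)
lemma opKb_opF:
  "q \<noteq> 0 \<Longrightarrow> qdiff q \<noteq> 0 \<Longrightarrow> opKb s (opF q x) p = q ^ 2 * opF q (opKb s x) p"
  by (cases p) (auto simp: opKb_def opF_def q2pow_simps field_simps)

lemma opE_opF_commutator:
  assumes q: "q \<noteq> 0" and d: "qdiff q \<noteq> 0"
  shows "opE q (opF q x) p - opF q (opE q x) p
     = (1 / qdiff q) * ((opK True x p + opK False x p) - (opKb True x p + opKb False x p))"
proof -
  obtain t i j k where p: "p = (t,i,j,k)" by (cases p) auto
  show ?thesis unfolding p
    by (cases j) (simp_all add: opE_def opF_def opK_def opKb_def q2pow_simps q d field_simps)
qed

definition act :: "complex \<Rightarrow> gen \<Rightarrow> vec \<Rightarrow> vec" where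
  "act q g = (case g of GK \<Rightarrow> opK True | GKb \<Rightarrow> opKb True | GL \<Rightarrow> opK False
     | GLb \<Rightarrow> opKb False | GE \<Rightarrow> opE q | GF \<Rightarrow> opF q)"

lemma act_simps [simp]: "act q GK = opK True" "act q GKb = opKb True" "act q GL = opK False"
  "act q GLb = opKb False" "act q GE = opE q" "act q GF = opF q"
  by (simp_all add: act_def)

fun rho :: "complex \<Rightarrow> gen list \<Rightarrow> vec \<Rightarrow> vec" where
  "rho q [] x = x"
| "rho q (g # w) x = act q g (rho q w x)"

lemma rho_append: "rho q (u @ v) x = rho q u (rho q v x)"
  by (induction u) auto

lemma act_linear:
  "act q g (\<lambda>p. a * x p + b * y p) = (\<lambda>p. a * act q g x p + b * act q g y p)"
  by (cases g) (auto simp: act_def opK_def opKb_def opE_def opF_def algebra_simps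
      add_divide_distrib diff_divide_distrib fun_eq_iff)

lemma act_sum:
  "finite A \<Longrightarrow> act q g (\<lambda>p. \<Sum>a\<in>A. c a * z a p) = (\<lambda>p. \<Sum>a\<in>A. c a * act q g (z a) p)"
proof (induction A rule: finite_induct)
  case empty
  show ?case using act_linear[of q g 0 "\<lambda>_. 0" 0 "\<lambda>_. 0"] by simp
next
  case (insert a A)
  then show ?case using act_linear[of q g "c a" "z a" 1 "\<lambda>p. \<Sum>b\<in>A. c b * z b p"] by simp
qed

lemma rho_sum:
  "finite A \<Longrightarrow> rho q u (\<lambda>p. \<Sum>a\<in>A. c a * z a p) = (\<lambda>p. \<Sum>a\<in>A. c a * rho q u (z a) p)"
  by (induction u) (auto simp: act_sum)

lemma rho_zero: "rho q u (\<lambda>p. 0) = (\<lambda>p. 0)"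
  using rho_sum[of "{}" q u] by simp

text \<open>The vector modelling E^j F^k, i.e.\ (P + Q) E^j F^k; the vacuum is EF_vec 0 0.\<close>
definition EF_vec :: "nat \<Rightarrow> nat \<Rightarrow> vec" where
  "EF_vec j k = (\<lambda>(t,i,j',k'). if i = 0 \<and> j' = j \<and> k' = k then 1 else 0)"
definition unit_vec :: "state \<Rightarrow> vec" where
  "unit_vec p = (\<lambda>p'. if p' = p then 1 else 0)"

definition gX :: "bool \<Rightarrow> gen" where "gX s = (if s then GK else GL)"
definition gXb :: "bool \<Rightarrow> gen" where "gXb s = (if s then GKb else GLb)"

lemma gX_simps: "gX True = GK" "gX False = GL" "gXb True = GKb" "gXb False = GLb"
  by (simp_all add: gX_def gXb_def)

lemma act_gX [simp]: "act q (gX s) = opK s" by (simp add: act_def gX_def)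
lemma act_gXb [simp]: "act q (gXb s) = opKb s" by (simp add: act_def gXb_def)

lemma rho_F_power: "rho q (replicate k GF) (EF_vec 0 0) = EF_vec 0 k"
  by (induction k) (auto simp: fun_eq_iff opF_def EF_vec_def q2pow_0)

lemma rho_E_power: "rho q (replicate j GE) (EF_vec 0 k) = EF_vec j k"
  by (induction j) (auto simp: fun_eq_iff opE_def EF_vec_def q2pow_0)

lemma rho_gX_power:
  "rho q (replicate n (gX s)) (EF_vec j k) = (if n = 0 then EF_vec j k else unit_vec (s, int n, j, k))"
  by (induction n) (auto simp: fun_eq_iff opK_def EF_vec_def unit_vec_def)

lemma rho_gXb_power:
  "rho q (replicate n (gXb s)) (EF_vec j k) = (if n = 0 then EF_vec j k else unit_vec (s, - int n, j, k))"
  by (induction n) (auto simp: fun_eq_iff opKb_def EF_vec_def unit_vec_def)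

fun ix :: "btype \<times> nat \<times> nat \<times> nat \<Rightarrow> state" where
  "ix (TP,i,j,k) = (True, int i, j, k)"
| "ix (TKb,i,j,k) = (True, - int i, j, k)"
| "ix (TQ,i,j,k) = (False, int i, j, k)"
| "ix (TLb,i,j,k) = (False, - int i, j, k)"

lemma rho_bword: "b \<in> basis_idx \<Longrightarrow> rho q (bword b) (EF_vec 0 0) = unit_vec (ix b)"
proof -
  assume b: "b \<in> basis_idx"
  obtain t i j k where bb: "b = (t,i,j,k)" by (cases b) auto
  have idem: "rho q (gX s # gXb s # replicate i (gX s) @ replicate j GE @ replicate k GF)
                (EF_vec 0 0) = unit_vec (s, int i, j, k)" for s
    by (simp add: rho_append rho_F_power rho_E_power rho_gX_power)
      (auto simp: fun_eq_iff opK_def opKb_def EF_vec_def unit_vec_def)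
  have inv: "i > 0 \<Longrightarrow> rho q (replicate i (gXb s) @ replicate j GE @ replicate k GF)
                (EF_vec 0 0) = unit_vec (s, - int i, j, k)" for s
    by (simp add: rho_append rho_F_power rho_E_power rho_gXb_power)
  show ?thesis using b idem[of True] idem[of False] inv[of True] inv[of False]
    unfolding bb by (cases t) (auto simp: basis_idx_def gX_simps)
qed

lemma ix_inj: "inj_on ix basis_idx"
proof (rule inj_onI)
  fix a b assume a: "a \<in> basis_idx" and b: "b \<in> basis_idx" and e: "ix a = ix b"
  obtain t i j k where aa: "a = (t,i,j,k)" by (cases a) auto
  obtain t' i' j' k' where bb: "b = (t',i',j',k')" by (cases b) auto
  show "a = b" using a b e unfolding aa bb
    by (cases t; cases t') (auto simp: basis_idx_def)
qed

section \<open>Linear independence\<close>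

definition rel_words :: "gen list set" where
  "rel_words = set [[GK,GKb,GK],[GK],[GKb,GK,GKb],[GKb],[GK,GKb],[GKb,GK],
             [GL,GLb,GL],[GL],[GLb,GL,GLb],[GLb],[GL,GLb],[GLb,GL],[],
             [GK,GE],[GE,GK],[GL,GE],[GE,GL],[GKb,GE],[GE,GKb],[GLb,GE],[GE,GLb],
             [GK,GF],[GF,GK],[GL,GF],[GF,GL],[GKb,GF],[GF,GKb],[GLb,GF],[GF,GLb],
             [GE,GF],[GF,GE]]"

lemma finite_rel_words [simp]: "finite rel_words" by (simp add: rel_words_def)

lemma rel_words_supp: "r \<in> U_rels q \<Longrightarrow> r a \<noteq> 0 \<Longrightarrow> a \<in> rel_words"
  unfolding U_rels_def
  by (simp only: insert_iff empty_iff, elim disjE)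
     (simp_all add: fa_defs mon_def rel_words_def split: if_splits)

lemma sum_mon: "finite A \<Longrightarrow> w \<in> A \<Longrightarrow> (\<Sum>a\<in>A. mon w a * z a) = z w"
proof -
  assume "finite A" "w \<in> A"
  have "(\<Sum>a\<in>A. mon w a * z a) = (\<Sum>a\<in>A. if w = a then z w else 0)"
    by (intro sum.cong) (auto simp: mon_def)
  then show ?thesis using \<open>finite A\<close> \<open>w \<in> A\<close> by simp
qed
lemma sum_fa_sub: "(\<Sum>a\<in>A. fa_sub f g a * z a) = (\<Sum>a\<in>A. f a * z a) - (\<Sum>a\<in>A. g a * z a)"
  by (simp add: fa_sub_def left_diff_distrib sum_subtractf)
lemma sum_fa_add: "(\<Sum>a\<in>A. fa_add f g a * z a) = (\<Sum>a\<in>A. f a * z a) + (\<Sum>a\<in>A. g a * z a)"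
  by (simp add: fa_add_def distrib_right sum.distrib)
lemma sum_fa_smul: "(\<Sum>a\<in>A. fa_smul c f a * z a) = c * (\<Sum>a\<in>A. f a * z a)"
  by (simp add: fa_smul_def sum_distrib_left mult.assoc)

lemma rel_acts_as_zero:
  assumes r: "r \<in> U_rels q" and q: "q \<noteq> 0" and d: "qdiff q \<noteq> 0"
  shows "(\<Sum>a\<in>rel_words. r a * rho q a y p) = 0"
  using r unfolding U_rels_def
  apply (simp only: insert_iff empty_iff)
  apply (elim disjE)
  apply (simp_all only: sum_fa_sub sum_fa_add sum_fa_smul)
  apply (simp_all add: sum_mon rel_words_def)
  apply (simp_all add: opK_opKb_opK opKb_opK_opKb opK_opE opKb_opE opK_opF opKb_opF q d)
  using idempotents_sum_to_one[of y p] opE_opF_commutator[OF q d, of y p] opK_opKb_commute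
  by (simp_all add: qdiff_def)

definition supp :: "fa \<Rightarrow> gen list set" where "supp x = {w. x w \<noteq> 0}"

definition on_vacuum :: "complex \<Rightarrow> gen list set \<Rightarrow> fa \<Rightarrow> vec" where
  "on_vacuum q A x = (\<lambda>p. \<Sum>w\<in>A. x w * rho q w (EF_vec 0 0) p)"

lemma on_vacuum_supp:
  "finite A \<Longrightarrow> supp x \<subseteq> A \<Longrightarrow> on_vacuum q A x = on_vacuum q (supp x) x"
  unfolding on_vacuum_def supp_def by (rule ext, rule sum.mono_neutral_right) auto

lemma ideal_annihilates_vacuum:
  assumes "x \<in> U_ideal q" and q: "q \<noteq> 0" and d: "qdiff q \<noteq> 0"
  shows "finite (supp x) \<and> on_vacuum q (supp x) x = (\<lambda>p. 0)"
  using assms(1)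
proof (induction rule: U_ideal.induct)
  case zero
  then show ?case by (simp add: supp_def fa_zero_def on_vacuum_def)
next
  case (gen r u v)
  let ?B = "(\<lambda>a. u @ a @ v) ` rel_words"
  have sub: "supp (ctx u v r) \<subseteq> ?B"
  proof
    fix w assume "w \<in> supp (ctx u v r)"
    then have nz: "ctx u v r w \<noteq> 0" by (simp add: supp_def)
    then obtain a where w: "w = u @ a @ v" using ctx_not by blast
    then have "r a \<noteq> 0" using nz by simp
    then show "w \<in> ?B" using w rel_words_supp[OF gen] by blast
  qed
  have fin: "finite ?B" by simp
  have inj: "inj_on (\<lambda>a. u @ a @ v) rel_words" by (rule inj_onI) simp
  have "on_vacuum q ?B (ctx u v r)
      = (\<lambda>p. \<Sum>a\<in>rel_words. r a * rho q u (rho q a (rho q v (EF_vec 0 0))) p)"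
    unfolding on_vacuum_def by (simp add: sum.reindex[OF inj] rho_append)
  also have "\<dots> = rho q u (\<lambda>p. \<Sum>a\<in>rel_words. r a * rho q a (rho q v (EF_vec 0 0)) p)"
    by (simp add: rho_sum)
  also have "\<dots> = (\<lambda>p. 0)"
    using rel_acts_as_zero[OF gen q d] by (simp add: rho_zero)
  finally show ?case
    using on_vacuum_supp[OF fin sub] fin sub finite_subset mul_mon_mon_eq_ctx by metis
next
  case (add a b)
  let ?A = "supp a \<union> supp b"
  have s: "supp (fa_add a b) \<subseteq> ?A" by (auto simp: supp_def fa_add_def)
  have f: "finite ?A" using add by simp
  have "on_vacuum q ?A (fa_add a b) = (\<lambda>p. on_vacuum q ?A a p + on_vacuum q ?A b p)"
    by (simp add: on_vacuum_def fa_add_def distrib_right sum.distrib)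
  also have "\<dots> = (\<lambda>p. 0)"
    using add on_vacuum_supp[OF f, of a q] on_vacuum_supp[OF f, of b q] by auto
  finally show ?case using on_vacuum_supp[OF f s] f s finite_subset by metis
next
  case (smul a c)
  have s: "supp (fa_smul c a) \<subseteq> supp a" by (auto simp: supp_def fa_smul_def)
  have f: "finite (supp a)" using smul by simp
  have "on_vacuum q (supp a) (fa_smul c a) = (\<lambda>p. c * on_vacuum q (supp a) a p)"
    by (simp add: on_vacuum_def fa_smul_def sum_distrib_left mult.assoc)
  also have "\<dots> = (\<lambda>p. 0)" using smul by simp
  finally show ?case using on_vacuum_supp[OF f s] f s finite_subset by metis
qed

lemma lincomb_on_vacuum:
  assumes S: "finite S" "S \<subseteq> basis_idx" and b0: "b0 \<in> S"
  shows "on_vacuum q (bword ` S) (lincomb S c) (ix b0) = c b0"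
proof -
  let ?B = "bword ` S"
  have fin: "finite ?B" using S by simp
  have "on_vacuum q ?B (lincomb S c) (ix b0)
      = (\<Sum>b\<in>S. c b * (\<Sum>w\<in>?B. mon (bword b) w * rho q w (EF_vec 0 0) (ix b0)))"
    unfolding on_vacuum_def lincomb_def
    by (simp add: sum_distrib_right sum_distrib_left mult.assoc sum.swap[of _ ?B])
  also have "\<dots> = (\<Sum>b\<in>S. c b * rho q (bword b) (EF_vec 0 0) (ix b0))"
    using fin by (intro sum.cong refl) (simp add: sum_mon)
  also have "\<dots> = (\<Sum>b\<in>S. if b = b0 then c b else 0)"
  proof (intro sum.cong refl)
    fix b assume "b \<in> S"
    then have b: "b \<in> basis_idx" and "b0 \<in> basis_idx" using S b0 by auto
    then have "ix b0 = ix b \<longleftrightarrow> b = b0" using inj_onD[OF ix_inj] by metis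
    then show "c b * rho q (bword b) (EF_vec 0 0) (ix b0) = (if b = b0 then c b else 0)"
      using b by (simp add: rho_bword unit_vec_def)
  qed
  also have "\<dots> = c b0" using S b0 by simp
  finally show ?thesis .
qed

theorem basis_independent:
  assumes q: "q \<noteq> 0" and d: "qdiff q \<noteq> 0"
    and S: "finite S" "S \<subseteq> basis_idx" and I: "lincomb S c \<in> U_ideal q" and b0: "b0 \<in> S"
  shows "c b0 = 0"
proof -
  have sub: "supp (lincomb S c) \<subseteq> bword ` S"
    by (auto simp: supp_def lincomb_def mon_def elim!: sum.not_neutral_contains_not_neutral
        split: if_splits)
  have "on_vacuum q (bword ` S) (lincomb S c) = (\<lambda>p. 0)"
    using ideal_annihilates_vacuum[OF I q d] on_vacuum_supp[OF _ sub] S by simp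
  then show ?thesis using lincomb_on_vacuum[OF S b0, of q c] by simp
qed

definition spanned :: "complex \<Rightarrow> fa \<Rightarrow> bool" where
  "spanned q x \<longleftrightarrow> (\<exists>S c. finite S \<and> S \<subseteq> basis_idx \<and> fa_sub x (lincomb S c) \<in> U_ideal q)"

abbreviation spanned_word :: "complex \<Rightarrow> gen list \<Rightarrow> bool" where
  "spanned_word q w \<equiv> spanned q (mon w)"

lemma spanned_ideal: "x \<in> U_ideal q \<Longrightarrow> spanned q x"
  unfolding spanned_def
  by (rule exI[of _ "{}"], rule exI[of _ "\<lambda>_. 0"]) (auto simp: lincomb_def fa_sub_def elim: ideal_cong)

lemma spanned_shift: "spanned q x \<Longrightarrow> d \<in> U_ideal q \<Longrightarrow> (\<And>w. y w = x w + d w) \<Longrightarrow> spanned q y"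
proof -
  assume "spanned q x" and d: "d \<in> U_ideal q" and y: "\<And>w. y w = x w + d w"
  then obtain S c where S: "finite S" "S \<subseteq> basis_idx" and I: "fa_sub x (lincomb S c) \<in> U_ideal q"
    unfolding spanned_def by blast
  have "fa_sub y (lincomb S c) \<in> U_ideal q"
    using I d by (rule ideal_lin[where a = 1 and b = 1]) (simp add: fa_sub_def y)
  then show ?thesis using S unfolding spanned_def by blast
qed

lemma spanned_lin: "spanned q x \<Longrightarrow> spanned q y \<Longrightarrow> spanned q (\<lambda>w. a * x w + b * y w)"
proof -
  assume "spanned q x" "spanned q y"
  then obtain S1 c1 S2 c2 where S1: "finite S1" "S1 \<subseteq> basis_idx"
      and I1: "fa_sub x (lincomb S1 c1) \<in> U_ideal q"
      and S2: "finite S2" "S2 \<subseteq> basis_idx" and I2: "fa_sub y (lincomb S2 c2) \<in> U_ideal q"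
    unfolding spanned_def by blast
  define S where "S = S1 \<union> S2"
  define c where "c t = a * (if t \<in> S1 then c1 t else 0) + b * (if t \<in> S2 then c2 t else 0)" for t
  have fS: "finite S" using S1 S2 by (simp add: S_def)
  have restrict: "(\<Sum>t\<in>S. if t \<in> S' then f t else 0) = sum f S'" if "S' \<subseteq> S" for S' f
    using fS that by (simp add: sum.inter_restrict[symmetric] Int_absorb1)
  have L: "lincomb S c w = a * lincomb S1 c1 w + b * lincomb S2 c2 w" for w
  proof -
    have "lincomb S c w = (\<Sum>t\<in>S. a * (if t \<in> S1 then c1 t * mon (bword t) w else 0)
        + b * (if t \<in> S2 then c2 t * mon (bword t) w else 0))"
      unfolding lincomb_def c_def by (intro sum.cong refl) (auto simp: algebra_simps)
    also have "\<dots> = a * lincomb S1 c1 w + b * lincomb S2 c2 w"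
      using restrict[of S1 "\<lambda>t. c1 t * mon (bword t) w"] restrict[of S2 "\<lambda>t. c2 t * mon (bword t) w"]
      by (simp add: sum.distrib sum_distrib_left[symmetric] S_def lincomb_def)
    finally show ?thesis .
  qed
  have "fa_sub (\<lambda>w. a * x w + b * y w) (lincomb S c) \<in> U_ideal q"
    using I1 I2 by (rule ideal_lin[where a = a and b = b]) (simp add: fa_sub_def L algebra_simps)
  then show ?thesis using fS S1 S2 unfolding spanned_def S_def by blast
qed

lemma spanned_lin_shift:
  "spanned q x \<Longrightarrow> spanned q y \<Longrightarrow> d \<in> U_ideal q \<Longrightarrow> (\<And>w. t w = a * x w + b * y w + d w)
   \<Longrightarrow> spanned q t"
  by (rule spanned_shift[OF spanned_lin]) auto

lemma spanned_sum:
  "finite S \<Longrightarrow> (\<And>b. b \<in> S \<Longrightarrow> spanned q (f b)) \<Longrightarrow> spanned q (\<lambda>w. \<Sum>b\<in>S. c b * f b w)"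
proof (induction S rule: finite_induct)
  case empty
  then show ?case by (simp add: spanned_ideal ideal_zero)
next
  case (insert a S)
  have "spanned q (\<lambda>w. c a * f a w + 1 * (\<Sum>b\<in>S. c b * f b w))"
    using insert by (intro spanned_lin) auto
  then show ?case using insert by simp
qed

lemma spanned_word_iff:
  assumes d: "(\<lambda>w. mon a w - c * mon b w) \<in> U_ideal q" and c: "c \<noteq> 0"
  shows "spanned_word q a \<longleftrightarrow> spanned_word q b"
proof
  assume b: "spanned_word q b"
  show "spanned_word q a"
    by (rule spanned_lin_shift[where a = c and b = 0, OF b b d]) simp
next
  assume a: "spanned_word q a"
  have "(\<lambda>w. (- 1 / c) * (mon a w - c * mon b w)) \<in> U_ideal q"
    using d d by (rule ideal_lin[where a = "-1/c" and b = 0]) simp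
  then show "spanned_word q b"
    by (rule spanned_lin_shift[where a = "1/c" and b = 0, OF a a]) (simp add: c field_simps)
qed

definition lmul :: "gen \<Rightarrow> fa \<Rightarrow> fa" where
  "lmul g x = (\<lambda>w. case w of [] \<Rightarrow> 0 | h # t \<Rightarrow> if h = g then x t else 0)"

lemma lmul_ctx: "lmul g (ctx u v r) = ctx (g # u) v r"
proof (rule ext)
  fix w
  show "lmul g (ctx u v r) w = ctx (g # u) v r w"
  proof (cases "\<exists>t a. w = g # t \<and> t = u @ a @ v")
    case True
    then obtain a where "w = g # u @ a @ v" by blast
    then show ?thesis using ctx_app[of "g # u" v r a] by (simp add: lmul_def)
  next
    case False
    then show ?thesis by (auto simp: lmul_def ctx_not split: list.split)
  qed
qed

lemma lmul_ideal: "x \<in> U_ideal q \<Longrightarrow> lmul g x \<in> U_ideal q"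
proof (induction rule: U_ideal.induct)
  case zero
  have "lmul g fa_zero = fa_zero" by (auto simp: lmul_def fa_zero_def fun_eq_iff split: list.split)
  then show ?case using U_ideal.zero by simp
next
  case (gen r u v)
  then show ?case by (simp add: mul_mon_mon_eq_ctx lmul_ctx ctx_rel_in_ideal)
next
  case (add a b)
  have "lmul g (fa_add a b) = fa_add (lmul g a) (lmul g b)"
    by (auto simp: lmul_def fa_add_def fun_eq_iff split: list.split)
  then show ?case using add by (simp add: U_ideal.add)
next
  case (smul a c)
  have "lmul g (fa_smul c a) = fa_smul c (lmul g a)"
    by (auto simp: lmul_def fa_smul_def fun_eq_iff split: list.split)
  then show ?case using smul by (simp add: U_ideal.smul)
qed

lemma spanned_cons:
  assumes B: "\<And>b. b \<in> basis_idx \<Longrightarrow> spanned_word q (g # bword b)" and w: "spanned_word q w"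
  shows "spanned_word q (g # w)"
proof -
  obtain S c where S: "finite S" "S \<subseteq> basis_idx" and I: "fa_sub (mon w) (lincomb S c) \<in> U_ideal q"
    using w unfolding spanned_def by blast
  have R: "spanned q (\<lambda>w. \<Sum>b\<in>S. c b * mon (g # bword b) w)"
    using S B by (intro spanned_sum) auto
  have "lmul g (fa_sub (mon w) (lincomb S c)) \<in> U_ideal q" using I by (rule lmul_ideal)
  with R show ?thesis
    by (rule spanned_shift) (auto simp: lmul_def fa_sub_def lincomb_def mon_def split: list.split)
qed

lemma rel_idem_X: "(\<lambda>w. mon (u @ gX s # gXb s # gX s # v) w - mon (u @ gX s # v) w) \<in> U_ideal q"
  using difference_in_ideal[of "[GK,GKb,GK]" "[GK]" q u v] difference_in_ideal[of "[GL,GLb,GL]" "[GL]" q u v]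
  by (cases s) (simp_all add: U_rels_def gX_simps)

lemma rel_idem_Xb: "(\<lambda>w. mon (u @ gXb s # gX s # gXb s # v) w - mon (u @ gXb s # v) w) \<in> U_ideal q"
  using difference_in_ideal[of "[GKb,GK,GKb]" "[GKb]" q u v]
    difference_in_ideal[of "[GLb,GL,GLb]" "[GLb]" q u v]
  by (cases s) (simp_all add: U_rels_def gX_simps)

lemma rel_X_Xb_commute: "(\<lambda>w. mon (u @ gX s # gXb s # v) w - mon (u @ gXb s # gX s # v) w) \<in> U_ideal q"
  using difference_in_ideal[of "[GK,GKb]" "[GKb,GK]" q u v] difference_in_ideal[of "[GL,GLb]" "[GLb,GL]" q u v]
  by (cases s) (simp_all add: U_rels_def gX_simps)

lemma rel_P_plus_Q:
  "(\<lambda>w. mon (u @ gX s # gXb s # v) w + mon (u @ gX (\<not>s) # gXb (\<not>s) # v) w - mon (u @ v) w) \<in> U_ideal q"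
proof -
  have "ctx u v (fa_sub (fa_add (mon [GK,GKb]) (mon [GL,GLb])) (mon [])) \<in> U_ideal q"
    by (rule ctx_rel_in_ideal) (simp add: U_rels_def)
  then show ?thesis
    by (rule ideal_cong) (simp only: ctx_simps, cases s, simp_all add: fa_defs gX_simps)
qed

lemma rel_X_E: "(\<lambda>w. mon (u @ gX s # GE # v) w - q^2 * mon (u @ GE # gX s # v) w) \<in> U_ideal q"
  using binomial_in_ideal[of "[GK,GE]" "q^2" "[GE,GK]" q u v] binomial_in_ideal[of "[GL,GE]" "q^2" "[GE,GL]" q u v]
  by (cases s) (simp_all add: U_rels_def gX_simps)

lemma rel_Xb_E:
  "(\<lambda>w. mon (u @ gXb s # GE # v) w - inverse q ^ 2 * mon (u @ GE # gXb s # v) w) \<in> U_ideal q"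
  using binomial_in_ideal[of "[GKb,GE]" "inverse q ^ 2" "[GE,GKb]" q u v]
    binomial_in_ideal[of "[GLb,GE]" "inverse q ^ 2" "[GE,GLb]" q u v]
  by (cases s) (simp_all add: U_rels_def gX_simps)

lemma rel_X_F:
  "(\<lambda>w. mon (u @ gX s # GF # v) w - inverse q ^ 2 * mon (u @ GF # gX s # v) w) \<in> U_ideal q"
  using binomial_in_ideal[of "[GK,GF]" "inverse q ^ 2" "[GF,GK]" q u v]
    binomial_in_ideal[of "[GL,GF]" "inverse q ^ 2" "[GF,GL]" q u v]
  by (cases s) (simp_all add: U_rels_def gX_simps)

lemma rel_Xb_F: "(\<lambda>w. mon (u @ gXb s # GF # v) w - q^2 * mon (u @ GF # gXb s # v) w) \<in> U_ideal q"
  using binomial_in_ideal[of "[GKb,GF]" "q^2" "[GF,GKb]" q u v]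
    binomial_in_ideal[of "[GLb,GF]" "q^2" "[GF,GLb]" q u v]
  by (cases s) (simp_all add: U_rels_def gX_simps)

lemma rel_E_F:
  "(\<lambda>w. mon (u @ GE # GF # v) w - mon (u @ GF # GE # v) w - 1 / (q - inverse q) *
      ((mon (u @ GK # v) w + mon (u @ GL # v) w) - (mon (u @ GKb # v) w + mon (u @ GLb # v) w)))
   \<in> U_ideal q"
proof -
  have "ctx u v (fa_sub (fa_sub (mon [GE,GF]) (mon [GF,GE])) (fa_smul (1 / (q - inverse q))
          (fa_sub (fa_add (mon [GK]) (mon [GL])) (fa_add (mon [GKb]) (mon [GLb]))))) \<in> U_ideal q"
    by (rule ctx_rel_in_ideal) (simp add: U_rels_def)
  then show ?thesis by (rule ideal_cong) (simp only: ctx_simps, simp add: fa_defs)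
qed

lemma cross_X_idem: "mon (u @ gX (\<not>s) # gX s # gXb s # v) \<in> U_ideal q"
  using rel_P_plus_Q[of "u @ [gX (\<not>s)]" s v q] rel_X_Xb_commute[of "u @ [gX (\<not>s)]" "\<not>s" v q]
    rel_idem_X[of u "\<not>s" v q]
  by (rule ideal_lin3[where a = 1 and b = "-1" and c = "-1"]) simp

lemma cross_Xb_idem: "mon (u @ gXb (\<not>s) # gX s # gXb s # v) \<in> U_ideal q"
  using rel_P_plus_Q[of "u @ [gXb (\<not>s)]" s v q] rel_idem_Xb[of u "\<not>s" v q] rel_idem_Xb[of u "\<not>s" v q]
  by (rule ideal_lin3[where a = 1 and b = "-1" and c = 0]) simp

lemma cross_X_Xb: "mon (u @ gX (\<not>s) # gXb s # v) \<in> U_ideal q"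
  using rel_idem_Xb[of "u @ [gX (\<not>s)]" s v q] rel_X_Xb_commute[of "u @ [gX (\<not>s)]" s "gXb s # v" q]
    cross_X_idem[of u s "gXb s # v" q]
  by (rule ideal_lin3[where a = "-1" and b = "-1" and c = 1]) simp

lemma cross_Xb_Xb: "mon (u @ gXb (\<not>s) # gXb s # v) \<in> U_ideal q"
  using rel_idem_Xb[of "u @ [gXb (\<not>s)]" s v q] rel_X_Xb_commute[of "u @ [gXb (\<not>s)]" s "gXb s # v" q]
    cross_Xb_idem[of u s "gXb s # v" q]
  by (rule ideal_lin3[where a = "-1" and b = "-1" and c = 1]) simp

lemmas spanned_word_iff_1 = spanned_word_iff[where c = 1, simplified]

lemma spanned_idem_Xb: "spanned_word q (u @ gXb s # gX s # gXb s # v) \<longleftrightarrow> spanned_word q (u @ gXb s # v)"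
  by (rule spanned_word_iff_1[OF rel_idem_Xb])
lemma spanned_X_Xb_commute: "spanned_word q (u @ gX s # gXb s # v) \<longleftrightarrow> spanned_word q (u @ gXb s # gX s # v)"
  by (rule spanned_word_iff_1[OF rel_X_Xb_commute])
lemma spanned_X_E: "q \<noteq> 0 \<Longrightarrow> spanned_word q (u @ gX s # GE # v) \<longleftrightarrow> spanned_word q (u @ GE # gX s # v)"
  by (rule spanned_word_iff[OF rel_X_E]) simp
lemma spanned_Xb_E: "q \<noteq> 0 \<Longrightarrow> spanned_word q (u @ gXb s # GE # v) \<longleftrightarrow> spanned_word q (u @ GE # gXb s # v)"
  by (rule spanned_word_iff[OF rel_Xb_E]) simp
lemma spanned_X_F: "q \<noteq> 0 \<Longrightarrow> spanned_word q (u @ gX s # GF # v) \<longleftrightarrow> spanned_word q (u @ GF # gX s # v)"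
  by (rule spanned_word_iff[OF rel_X_F]) simp
lemma spanned_Xb_F: "q \<noteq> 0 \<Longrightarrow> spanned_word q (u @ gXb s # GF # v) \<longleftrightarrow> spanned_word q (u @ GF # gXb s # v)"
  by (rule spanned_word_iff[OF rel_Xb_F]) simp

lemma spanned_move_past_power:
  assumes swap: "\<And>u v. spanned_word q (u @ a # g # v) \<longleftrightarrow> spanned_word q (u @ g # a # v)"
  shows "spanned_word q (u @ a # replicate i g @ v) \<longleftrightarrow> spanned_word q (u @ replicate i g @ a # v)"
proof (induction i arbitrary: u)
  case 0
  show ?case by simp
next
  case (Suc i)
  have "spanned_word q (u @ a # replicate (Suc i) g @ v)
        \<longleftrightarrow> spanned_word q ((u @ [g]) @ a # replicate i g @ v)"
    using swap[of u "replicate i g @ v"] by simp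
  also have "\<dots> \<longleftrightarrow> spanned_word q ((u @ [g]) @ replicate i g @ a # v)" by (rule Suc.IH)
  finally show ?case by (simp add: replicate_app_Cons_same)
qed

lemma spanned_F_E:
  assumes "spanned_word q (u @ GE # GF # v)" "spanned_word q (u @ GK # v)" "spanned_word q (u @ GL # v)"
    "spanned_word q (u @ GKb # v)" "spanned_word q (u @ GLb # v)"
  shows "spanned_word q (u @ GF # GE # v)"
proof -
  let ?d = "1 / (q - inverse q)"
  have r1: "spanned q (\<lambda>w. 1 * mon (u @ GE # GF # v) w + (- ?d) * mon (u @ GK # v) w)"
    using assms(1,2) by (rule spanned_lin)
  have r2: "spanned q (\<lambda>w. 1 * mon (u @ GL # v) w + (- 1) * mon (u @ GKb # v) w)"
    using assms(3,4) by (rule spanned_lin)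
  have r3: "spanned q (\<lambda>w. 1 * (1 * mon (u @ GE # GF # v) w + (- ?d) * mon (u @ GK # v) w)
       + (- ?d) * (1 * mon (u @ GL # v) w + (- 1) * mon (u @ GKb # v) w))"
    using r1 r2 by (rule spanned_lin)
  have "(\<lambda>w. (-1) * (mon (u @ GE # GF # v) w - mon (u @ GF # GE # v) w - ?d *
      ((mon (u @ GK # v) w + mon (u @ GL # v) w) - (mon (u @ GKb # v) w + mon (u @ GLb # v) w))))
      \<in> U_ideal q"
    using rel_E_F rel_E_F by (rule ideal_lin[where a = "-1" and b = 0]) simp
  with r3 assms(5) show ?thesis
    by (rule spanned_lin_shift[where a = 1 and b = ?d]) (simp add: algebra_simps)
qed

section \<open>Spanning\<close>

definition EF_word :: "nat \<Rightarrow> nat \<Rightarrow> gen list" where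
  "EF_word j k = replicate j GE @ replicate k GF"
definition idem_word :: "bool \<Rightarrow> nat \<Rightarrow> gen list \<Rightarrow> gen list" where
  "idem_word s i t = gX s # gXb s # replicate i (gX s) @ t"
definition inv_word :: "bool \<Rightarrow> nat \<Rightarrow> gen list \<Rightarrow> gen list" where
  "inv_word s i t = replicate i (gXb s) @ t"

lemma basis_word_cases:
  assumes "b \<in> basis_idx"
  obtains (idem) s i j k where "bword b = idem_word s i (EF_word j k)"
    | (inv) s i j k where "i > 0" "bword b = inv_word s i (EF_word j k)"
proof -
  obtain t i j k where b: "b = (t,i,j,k)" by (cases b) auto
  note defs = b idem_word_def inv_word_def EF_word_def gX_simps
  have pos: "t = TKb \<or> t = TLb \<Longrightarrow> i > 0" using assms by (auto simp: b basis_idx_def)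
  show ?thesis
  proof (cases t)
    case TP
    show ?thesis by (rule idem[of True i j k]) (simp add: defs TP)
  next
    case TKb
    show ?thesis by (rule inv[of i True j k]) (simp_all add: defs TKb pos)
  next
    case TQ
    show ?thesis by (rule idem[of False i j k]) (simp add: defs TQ)
  next
    case TLb
    show ?thesis by (rule inv[of i False j k]) (simp_all add: defs TLb pos)
  qed
qed

lemma spanned_bword: "b \<in> basis_idx \<Longrightarrow> spanned_word q (bword b)"
  unfolding spanned_def
  by (intro exI[of _ "{b}"] exI[of _ "\<lambda>_. 1"]) (auto simp: lincomb_def fa_sub_def intro: ideal_cong[OF ideal_zero])

lemma spanned_idem_word: "spanned_word q (idem_word s i (EF_word j k))"
  using spanned_bword[of "(if s then TP else TQ, i, j, k)" q]
  by (cases s) (simp_all add: basis_idx_def idem_word_def EF_word_def gX_simps)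

lemma spanned_inv_word: "i > 0 \<Longrightarrow> spanned_word q (inv_word s i (EF_word j k))"
  using spanned_bword[of "(if s then TKb else TLb, i, j, k)" q]
  by (cases s) (simp_all add: basis_idx_def inv_word_def EF_word_def gX_simps)

lemma X_idem_word: "spanned_word q (gX s # idem_word s i (EF_word j k))"
  using spanned_idem_word[of q s "Suc i" j k]
    spanned_X_Xb_commute[of q "[gX s]" s "replicate i (gX s) @ EF_word j k"]
  by (simp add: idem_word_def)

lemma Xb_idem_word: "spanned_word q (gXb s # idem_word s i (EF_word j k))"
proof (cases i)
  case 0
  then show ?thesis using spanned_inv_word[of 1 q s j k] spanned_idem_Xb[of q "[]" s "EF_word j k"]
    by (simp add: idem_word_def inv_word_def)
next
  case (Suc m)
  then show ?thesis using spanned_idem_word[of q s m j k]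
    spanned_idem_Xb[of q "[]" s "gX s # replicate m (gX s) @ EF_word j k"]
    spanned_X_Xb_commute[of q "[]" s "replicate m (gX s) @ EF_word j k"]
    by (simp add: idem_word_def)
qed

lemma X_inv_word: "i > 0 \<Longrightarrow> spanned_word q (gX s # inv_word s i (EF_word j k))"
proof (cases "i - 1")
  case 0
  moreover assume "i > 0"
  ultimately have "i = 1" by simp
  then show ?thesis using spanned_idem_word[of q s 0 j k] by (simp add: idem_word_def inv_word_def)
next
  case (Suc n)
  then have "i = Suc (Suc n)" by simp
  then show ?thesis using spanned_inv_word[of "Suc n" q s j k]
    spanned_X_Xb_commute[of q "[]" s "gXb s # replicate n (gXb s) @ EF_word j k"]
    spanned_idem_Xb[of q "[]" s "replicate n (gXb s) @ EF_word j k"]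
    by (simp add: inv_word_def)
qed

lemma Xb_inv_word: "i > 0 \<Longrightarrow> spanned_word q (gXb s # inv_word s i (EF_word j k))"
  using spanned_inv_word[of "Suc i" q s j k] by (simp add: inv_word_def)

lemma cross_idem_word:
  "spanned_word q (gX (\<not>s) # idem_word s i t)" "spanned_word q (gXb (\<not>s) # idem_word s i t)"
  using spanned_ideal[OF cross_X_idem[of "[]" s "replicate i (gX s) @ t" q]]
    spanned_ideal[OF cross_Xb_idem[of "[]" s "replicate i (gX s) @ t" q]]
  by (simp_all add: idem_word_def)

lemma cross_inv_word:
  assumes "i > 0"
  shows "spanned_word q (gX (\<not>s) # inv_word s i t)" "spanned_word q (gXb (\<not>s) # inv_word s i t)"
proof -
  have i: "replicate i (gXb s) = gXb s # replicate (i - 1) (gXb s)"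
    using assms by (cases i) simp_all
  show "spanned_word q (gX (\<not>s) # inv_word s i t)" "spanned_word q (gXb (\<not>s) # inv_word s i t)"
    using spanned_ideal[OF cross_X_Xb[of "[]" s "replicate (i - 1) (gXb s) @ t" q]]
      spanned_ideal[OF cross_Xb_Xb[of "[]" s "replicate (i - 1) (gXb s) @ t" q]]
    by (simp_all add: inv_word_def i)
qed

lemma spanned_X_cons: "spanned_word q w \<Longrightarrow> spanned_word q (gX s' # w)"
proof (rule spanned_cons)
  fix b assume "b \<in> basis_idx"
  then show "spanned_word q (gX s' # bword b)"
  proof (cases rule: basis_word_cases)
    case (idem s i j k)
    have "s' = s \<or> s' = (\<not> s)" by auto
    then show ?thesis
      using X_idem_word[where q = q and s = s] cross_idem_word(1)[where q = q and s = s] idem by auto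
  next
    case (inv s i j k)
    have "s' = s \<or> s' = (\<not> s)" by auto
    then show ?thesis
      using X_inv_word[OF inv(1), where q = q and s = s] cross_inv_word(1)[OF inv(1), where q = q and s = s]
        inv(2) by auto
  qed
qed

lemma spanned_Xb_cons: "spanned_word q w \<Longrightarrow> spanned_word q (gXb s' # w)"
proof (rule spanned_cons)
  fix b assume "b \<in> basis_idx"
  then show "spanned_word q (gXb s' # bword b)"
  proof (cases rule: basis_word_cases)
    case (idem s i j k)
    have "s' = s \<or> s' = (\<not> s)" by auto
    then show ?thesis
      using Xb_idem_word[where q = q and s = s] cross_idem_word(2)[where q = q and s = s] idem by auto
  next
    case (inv s i j k)
    have "s' = s \<or> s' = (\<not> s)" by auto
    then show ?thesis
      using Xb_inv_word[OF inv(1), where q = q and s = s] cross_inv_word(2)[OF inv(1), where q = q and s = s]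
        inv(2) by auto
  qed
qed

lemma spanned_prefix_powers:
  "spanned_word q w \<Longrightarrow> spanned_word q (gX s # gXb s # replicate i (gX s) @ w)"
  "spanned_word q w \<Longrightarrow> spanned_word q (replicate i (gXb s) @ w)"
proof -
  have X: "spanned_word q (replicate i (gX s) @ w)" if "spanned_word q w" for w
    using that by (induction i) (simp_all add: spanned_X_cons)
  show "spanned_word q w \<Longrightarrow> spanned_word q (gX s # gXb s # replicate i (gX s) @ w)"
    by (intro spanned_X_cons spanned_Xb_cons X)
  show "spanned_word q w \<Longrightarrow> spanned_word q (replicate i (gXb s) @ w)"
    by (induction i) (simp_all add: spanned_Xb_cons)
qed

lemma spanned_move_into_idem_word:
  assumes swapX: "\<And>u v. spanned_word q (u @ a # gX s # v) \<longleftrightarrow> spanned_word q (u @ gX s # a # v)"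
    and swapXb: "\<And>u v. spanned_word q (u @ a # gXb s # v) \<longleftrightarrow> spanned_word q (u @ gXb s # a # v)"
  shows "spanned_word q (a # idem_word s i t) \<longleftrightarrow> spanned_word q (idem_word s i (a # t))"
proof -
  have "spanned_word q (a # idem_word s i t)
        \<longleftrightarrow> spanned_word q ([gX s] @ a # gXb s # replicate i (gX s) @ t)"
    using swapX[of "[]" "gXb s # replicate i (gX s) @ t"] by (simp add: idem_word_def)
  also have "\<dots> \<longleftrightarrow> spanned_word q ([gX s, gXb s] @ a # replicate i (gX s) @ t)"
    using swapXb[of "[gX s]" "replicate i (gX s) @ t"] by simp
  also have "\<dots> \<longleftrightarrow> spanned_word q ([gX s, gXb s] @ replicate i (gX s) @ a # t)"
    by (rule spanned_move_past_power[OF swapX])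
  finally show ?thesis by (simp add: idem_word_def)
qed

lemma spanned_move_into_inv_word:
  assumes swapXb: "\<And>u v. spanned_word q (u @ a # gXb s # v) \<longleftrightarrow> spanned_word q (u @ gXb s # a # v)"
  shows "spanned_word q (a # inv_word s i t) \<longleftrightarrow> spanned_word q (inv_word s i (a # t))"
  using spanned_move_past_power[OF swapXb, of "[]" i t] by (simp add: inv_word_def)

text \<open>E commutes past K, L, Kbar, Lbar up to scalars, so E times a basis word is spanned.\<close>
lemma spanned_E_cons:
  assumes q: "q \<noteq> 0" and w: "spanned_word q w"
  shows "spanned_word q (GE # w)"
proof (rule spanned_cons[OF _ w])
  fix b assume "b \<in> basis_idx"
  then show "spanned_word q (GE # bword b)"
  proof (cases rule: basis_word_cases)
    case (idem s i j k)
    then show ?thesis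
      using spanned_move_into_idem_word[OF spanned_X_E[OF q, symmetric] spanned_Xb_E[OF q, symmetric]]
        spanned_idem_word[of q s i "Suc j" k]
      by (simp add: EF_word_def)
  next
    case (inv s i j k)
    then show ?thesis
      using spanned_move_into_inv_word[OF spanned_Xb_E[OF q, symmetric]] spanned_inv_word[of i q s "Suc j" k]
      by (simp add: EF_word_def)
  qed
qed

text \<open>Every E^j F^k is spanned, using P + Q = 1.\<close>
lemma spanned_EF_word: "spanned_word q (EF_word j k)"
proof -
  have idem: "spanned_word q (gX s # gXb s # EF_word j k)" for s
    using spanned_idem_word[of q s 0 j k] by (simp add: idem_word_def)
  have "(\<lambda>w. (-1) * (mon (gX True # gXb True # EF_word j k) w
            + mon (gX False # gXb False # EF_word j k) w - mon (EF_word j k) w)) \<in> U_ideal q"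
    using rel_P_plus_Q[of "[]" True "EF_word j k" q] rel_P_plus_Q[of "[]" True "EF_word j k" q]
    by (rule ideal_lin[where a = "-1" and b = 0]) simp
  then show ?thesis by (rule spanned_lin_shift[where a = 1 and b = 1, OF idem[of True] idem[of False]]) simp
qed

text \<open>F E^j F^k is spanned: induction on j, each step trading F E for E F via [E,F].\<close>
lemma spanned_F_EF_word: "q \<noteq> 0 \<Longrightarrow> spanned_word q (GF # EF_word j k)"
proof (induction j)
  case 0
  then show ?case using spanned_EF_word[of q 0 "Suc k"] by (simp add: EF_word_def)
next
  case (Suc j)
  have EF: "spanned_word q (GE # GF # EF_word j k)" using Suc by (intro spanned_E_cons) auto
  have X: "spanned_word q (gX s # EF_word j k)" "spanned_word q (gXb s # EF_word j k)" for s
    using spanned_EF_word by (auto intro: spanned_X_cons spanned_Xb_cons)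
  show ?case using spanned_F_E[of q "[]" "EF_word j k"] EF X[of True] X[of False]
    by (simp add: gX_simps EF_word_def)
qed

text \<open>F commutes past K, L, Kbar, Lbar up to scalars, so F times a basis word is spanned.\<close>
lemma spanned_F_cons:
  assumes q: "q \<noteq> 0" and w: "spanned_word q w"
  shows "spanned_word q (GF # w)"
proof (rule spanned_cons[OF _ w])
  fix b assume "b \<in> basis_idx"
  then show "spanned_word q (GF # bword b)"
  proof (cases rule: basis_word_cases)
    case (idem s i j k)
    have "spanned_word q (idem_word s i (GF # EF_word j k))"
      unfolding idem_word_def by (rule spanned_prefix_powers(1)[OF spanned_F_EF_word[OF q]])
    then show ?thesis
      using spanned_move_into_idem_word[OF spanned_X_F[OF q, symmetric] spanned_Xb_F[OF q, symmetric]] idem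
      by simp
  next
    case (inv s i j k)
    have "spanned_word q (inv_word s i (GF # EF_word j k))"
      unfolding inv_word_def by (rule spanned_prefix_powers(2)[OF spanned_F_EF_word[OF q]])
    then show ?thesis
      using spanned_move_into_inv_word[OF spanned_Xb_F[OF q, symmetric]] inv by simp
  qed
qed

lemma spanned_all_words: "q \<noteq> 0 \<Longrightarrow> spanned_word q w"
proof (induction w)
  case Nil
  then show ?case using spanned_EF_word[of q 0 0] by (simp add: EF_word_def)
next
  case (Cons g w)
  then have q: "q \<noteq> 0" and w: "spanned_word q w" by auto
  show ?case
  proof (cases g)
    case GK then show ?thesis using spanned_X_cons[OF w, of True] by (simp add: gX_simps)
  next
    case GKb then show ?thesis using spanned_Xb_cons[OF w, of True] by (simp add: gX_simps)
  next
    case GL then show ?thesis using spanned_X_cons[OF w, of False] by (simp add: gX_simps)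
  next
    case GLb then show ?thesis using spanned_Xb_cons[OF w, of False] by (simp add: gX_simps)
  next
    case GE then show ?thesis using spanned_E_cons[OF q w] by simp
  next
    case GF then show ?thesis using spanned_F_cons[OF q w] by simp
  qed
qed

theorem basis_spans: "q \<noteq> 0 \<Longrightarrow> finite {w. f w \<noteq> 0} \<Longrightarrow> spanned q f"
proof -
  assume q: "q \<noteq> 0" and f: "finite {w. f w \<noteq> 0}"
  have "(\<lambda>w. \<Sum>u\<in>{w. f w \<noteq> 0}. f u * mon u w) = f"
  proof
    fix w
    have "(\<Sum>u\<in>{w. f w \<noteq> 0}. f u * mon u w) = (\<Sum>u\<in>{w. f w \<noteq> 0}. if w = u then f w else 0)"
      by (intro sum.cong refl) (simp add: mon_def)
    then show "(\<Sum>u\<in>{w. f w \<noteq> 0}. f u * mon u w) = f w" using f by (simp add: sum.delta)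
  qed
  moreover have "spanned q (\<lambda>w. \<Sum>u\<in>{w. f w \<noteq> 0}. f u * mon u w)"
    by (rule spanned_sum[OF f spanned_all_words[OF q]])
  ultimately show ?thesis by simp
qed

theorem proposition6:
  fixes q :: complex
  assumes "q \<noteq> 0" and "q \<noteq> 1" and "q \<noteq> -1"
  shows "(\<forall>f::fa. finite {w. f w \<noteq> 0} \<longrightarrow>
            (\<exists>S c. finite S \<and> S \<subseteq> basis_idx \<and> fa_sub f (lincomb S c) \<in> U_ideal q))
       \<and> (\<forall>S c. finite S \<and> S \<subseteq> basis_idx \<and> lincomb S c \<in> U_ideal q \<longrightarrow> (\<forall>b\<in>S. c b = 0))"
proof -
  have "qdiff q \<noteq> 0"
  proof
    assume "qdiff q = 0"
    then have "(q - 1) * (q + 1) = 0"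
      using assms(1) by (simp add: qdiff_def field_simps power2_eq_square)
    then show False using assms by (auto simp: eq_neg_iff_add_eq_0)
  qed
  then show ?thesis
    using basis_spans[OF assms(1)] basis_independent[OF assms(1)] unfolding spanned_def by blast
qed

end
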